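(* For all integers $m,n\ge 2$, $\chi_{ei}(P_m\square P_n)=2$.
   Context: All graphs are finite and simple. $P_k$ denotes the path on $k$ vertices. A path $P_4$ in $G$ is a sequence $uxyv$ of four distinct vertices with $ux,xy,yv\in E(G)$; $u,v$ are its end vertices. An $e$-injective $k$-coloring of $G$ is a function $f:V(G)\to\{1,\dots,k\}$ with $f(u)\ne f(v)$ whenever $u,v$ are the end vertices of some path $P_4$ in $G$; $\chi_{ei}(G)$ is the least such $k$. In the Cartesian product $G\square H$ (vertex set $V(G)\times V(H)$) two vertices are adjacent if they are adjacent in one coordinate and equal in the other. *)

theory Defs
  imports Main
begin

text \<open>A simple graph is given by a vertex set V and a symmetric irreflexive
adjacency relation adj (only used on V).\<close>

definition path_adj :: "nat \<Rightarrow> nat \<Rightarrow> nat \<Rightarrow> bool" where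
  "path_adj k i j \<longleftrightarrow> i < k \<and> j < k \<and> (i + 1 = j \<or> j + 1 = i)"

definition path_verts :: "nat \<Rightarrow> nat set" where
  "path_verts k = {0..<k}"

definition cart_adj :: "('a \<Rightarrow> 'a \<Rightarrow> bool) \<Rightarrow> ('b \<Rightarrow> 'b \<Rightarrow> bool)
    \<Rightarrow> 'a \<times> 'b \<Rightarrow> 'a \<times> 'b \<Rightarrow> bool" where
  "cart_adj adjG adjH p q \<longleftrightarrow>
     (adjG (fst p) (fst q) \<and> snd p = snd q) \<or> (fst p = fst q \<and> adjH (snd p) (snd q))"

definition P4_ends :: "'a set \<Rightarrow> ('a \<Rightarrow> 'a \<Rightarrow> bool) \<Rightarrow> 'a \<Rightarrow> 'a \<Rightarrow> bool" where
  "P4_ends V adj u v \<longleftrightarrow> (\<exists>x y. u \<in> V \<and> x \<in> V \<and> y \<in> V \<and> v \<in> V \<and>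
      distinct [u, x, y, v] \<and> adj u x \<and> adj x y \<and> adj y v)"

definition e_injective_coloring :: "'a set \<Rightarrow> ('a \<Rightarrow> 'a \<Rightarrow> bool) \<Rightarrow> nat \<Rightarrow> ('a \<Rightarrow> nat) \<Rightarrow> bool" where
  "e_injective_coloring V adj k f \<longleftrightarrow>
     (\<forall>x\<in>V. f x \<in> {1..k}) \<and> (\<forall>u v. P4_ends V adj u v \<longrightarrow> f u \<noteq> f v)"

definition chi_ei :: "'a set \<Rightarrow> ('a \<Rightarrow> 'a \<Rightarrow> bool) \<Rightarrow> nat" where
  "chi_ei V adj = (LEAST k. \<exists>f. e_injective_coloring V adj k f)"

end

theory Submission
  imports Defs
begin

text \<open>The grid is bipartite with sides given by the parity of the coordinate sum. The two ends
  of a path on four vertices are three edges apart, hence on opposite sides, so colouring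
  by side is e-injective with two colours. One colour is not enough because every
  4-cycle, here the unit square at the origin, contains a path P4.\<close>

definition bipartition :: "'a set \<Rightarrow> ('a \<Rightarrow> 'a \<Rightarrow> bool) \<Rightarrow> ('a \<Rightarrow> bool) \<Rightarrow> bool" where
  "bipartition V adj side \<longleftrightarrow> (\<forall>u\<in>V. \<forall>v\<in>V. adj u v \<longrightarrow> side u \<noteq> side v)"

lemma bipartition_path: "bipartition (path_verts k) (path_adj k) even"
  unfolding bipartition_def path_adj_def by auto

lemma bipartition_cart_adj:
  assumes "bipartition VG adjG sideG" and "bipartition VH adjH sideH"
  shows "bipartition (VG \<times> VH) (cart_adj adjG adjH) (\<lambda>p. sideG (fst p) \<noteq> sideH (snd p))"
  using assms unfolding bipartition_def cart_adj_def by fastforce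

lemma bipartition_P4_ends:
  assumes "bipartition V adj side" and "P4_ends V adj u v"
  shows "side u \<noteq> side v"
proof -
  obtain x y where "x \<in> V" "y \<in> V" "u \<in> V" "v \<in> V" "adj u x" "adj x y" "adj y v"
    using assms(2) unfolding P4_ends_def by blast
  then have "side u \<noteq> side x" "side x \<noteq> side y" "side y \<noteq> side v"
    using assms(1) unfolding bipartition_def by blast+
  then show ?thesis by blast
qed

lemma e_injective_coloring_bipartition:
  assumes "bipartition V adj side"
  shows "e_injective_coloring V adj 2 (\<lambda>x. if side x then 2 else 1)"
  using bipartition_P4_ends[OF assms] unfolding e_injective_coloring_def by auto

lemma e_injective_coloring_ge_2:
  assumes "e_injective_coloring V adj k f" and "P4_ends V adj u v"
  shows "2 \<le> k"
proof -
  have "u \<in> V" "v \<in> V" using assms(2) unfolding P4_ends_def by blast+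
  then have "f u \<in> {1..k}" "f v \<in> {1..k}" "f u \<noteq> f v"
    using assms unfolding e_injective_coloring_def by blast+
  then show ?thesis by auto
qed

lemma chi_ei_bipartition:
  assumes "bipartition V adj side" and "P4_ends V adj u v"
  shows "chi_ei V adj = 2"
  unfolding chi_ei_def
proof (rule Least_equality)
  show "\<exists>f. e_injective_coloring V adj 2 f"
    using e_injective_coloring_bipartition[OF assms(1)] by blast
  show "2 \<le> k" if "\<exists>f. e_injective_coloring V adj k f" for k
    using that e_injective_coloring_ge_2[OF _ assms(2)] by blast
qed

lemma P4_ends_grid_square:
  assumes "m \<ge> 2" and "n \<ge> 2"
  shows "P4_ends (path_verts m \<times> path_verts n) (cart_adj (path_adj m) (path_adj n)) (0, 0) (0, 1)"
  unfolding P4_ends_def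
proof (intro exI conjI)
  show "(1, 0) \<in> path_verts m \<times> path_verts n" "(1, 1) \<in> path_verts m \<times> path_verts n"
    "(0, 0) \<in> path_verts m \<times> path_verts n" "(0, 1) \<in> path_verts m \<times> path_verts n"
    using assms by (auto simp: path_verts_def)
qed (use assms in \<open>auto simp: cart_adj_def path_adj_def\<close>)

theorem theorem4p2:
  fixes m n :: nat
  assumes "m \<ge> 2" and "n \<ge> 2"
  shows "chi_ei (path_verts m \<times> path_verts n) (cart_adj (path_adj m) (path_adj n)) = 2"
  using chi_ei_bipartition[OF bipartition_cart_adj[OF bipartition_path bipartition_path]
      P4_ends_grid_square[OF assms]] .

end
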